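(* Let $k,n,m$ be positive integers with $n+m\le k$ and let $q$ be a prime power. Let $\mathbb{T}$ be the set of $1$-dimensional subspaces of $\mathbb{F}_q^k$ and define $\mathbb{X}=\{\{T_1,\dots,T_n\}\subseteq\mathbb{T}: \dim(T_1+\cdots+T_n)=n\}$, $\mathbb{Y}=\{\{T_1,\dots,T_m\}\subseteq\mathbb{T}: \dim(T_1+\cdots+T_m)=m\}$, $\mathbb{Z}=\{\{T_1,\dots,T_{n+m}\}\subseteq\mathbb{T}: \dim(T_1+\cdots+T_{n+m})=n+m\}$. Let $B$ be the bipartite graph with left (user) vertex set $\mathbb{X}$, right (subfile) vertex set $\mathbb{Y}$, and $X\in\mathbb{X}$ adjacent to $Y\in\mathbb{Y}$ if and only if $X\cup Y\in\mathbb{Z}$. Then $B$ is a $(K,F,D)$ bipartite caching graph admitting an induced matching cover with $$S=\frac{1}{(n+m)!}\,q^{\frac{(n+m)(n+m-1)}{2}}\prod_{i=0}^{n+m-1}\binom{k-i}{1}_q$$ induced matchings, each having $g=\binom{n+m}{n}$ edges, and it defines a coded caching scheme (for $N\ge K$ files) with $$K=\frac{1}{n!}q^{\frac{n(n-1)}{2}}\prod_{i=0}^{n-1}\binom{k-i}{1}_q,\qquad F=\frac{1}{m!}q^{\frac{m(m-1)}{2}}\prod_{i=0}^{m-1}\binom{k-i}{1}_q,$$ $$\frac{M}{N}=1-q^{nm}\prod_{i=0}^{m-1}\frac{\binom{k-n-i}{1}_q}{\binom{k-i}{1}_q},\qquad R=\frac{m!\,q^{nm}}{(n+m)!}\,q^{\frac{n(n-1)}{2}}\prod_{i=0}^{n-1}\binom{k-m-i}{1}_q,$$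 and global caching gain $\gamma=\binom{n+m}{n}$.
   Context: $\binom{a}{1}_q=\frac{q^a-1}{q-1}$ is the number of $1$-dimensional subspaces of $\mathbb{F}_q^a$; $\binom{n+m}{n}$ is an ordinary binomial coefficient. Coded caching setup: a server holds $N$ files $W_1,\dots,W_N$ and is connected by an error-free broadcast link to $K$ users, each having a cache able to store $M$ files; it is assumed throughout that $N\ge K$. Each file is split into $F$ equal-size subfiles $W_{i,f}$, $f\in\mathcal{F}$, $|\mathcal{F}|=F$ ($F$ is the subpacketization). Caching is done before demands are known and is symmetric: for every user $k$ and index $f$, user $k$ caches either $W_{i,f}$ for all $i$ or for no $i$. In the delivery phase every user demands one file and the server broadcasts transmissions, each of the size of one subfile, so that every user can recover its demanded file from its cache and the transmissions, for every demand vector. The rate is $R=(\text{number of transmissions})/F$ and the global caching gain is $\gamma=K(1-M/N)/R$. A $(K,F,D)$ bipartite caching graph is a bipartite graph with $K$ left (user) vertices and $F$ right (subfile) vertices in which every left vertex has degree $D$; it defines the symmetric caching scheme in which user $k$ does not cache the subfiles with index $f$ exactly when $\{k,f\}$ is an edge (so $M/N=1-D/F$). An induced matching of a bipartite graph $B$ is a set $\mathcal{C}\subseteq E(B)$ such that for any two distinct edges $\{k_1,f_1\},\{k_2,f_2\}\in\mathcal{C}$ we have $k_1\ne k_2$, $f_1\ne f_2$ and $\{k_1,f_2\},\{k_2,f_1\}\notin E(B)$. An induced matching cover of $B$ is a set of induced matchings partitioning $E(B)$; each induced matching $\{\{k_i,f_i\}\}_i$ gives the transmission $\sum_i W_{d_{k_i},f_i}$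 where $W_{d_k}$ is the file demanded by user $k$. *)

theory Defs
  imports "HOL-Analysis.Analysis"
begin

definition bipartite :: "'u set \<Rightarrow> 'f set \<Rightarrow> ('u \<times> 'f) set \<Rightarrow> bool" where
  "bipartite L R E \<longleftrightarrow> finite L \<and> finite R \<and> E \<subseteq> L \<times> R"

definition caching_graph ::
  "'u set \<Rightarrow> 'f set \<Rightarrow> ('u \<times> 'f) set \<Rightarrow> nat \<Rightarrow> nat \<Rightarrow> nat \<Rightarrow> bool" where
  "caching_graph L R E K F D \<longleftrightarrow> bipartite L R E \<and> card L = K \<and> card R = F \<and>
     (\<forall>x\<in>L. card {y. (x, y) \<in> E} = D)"

definition induced_matching :: "('u \<times> 'f) set \<Rightarrow> ('u \<times> 'f) set \<Rightarrow> bool" where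
  "induced_matching E C \<longleftrightarrow> C \<subseteq> E \<and>
     (\<forall>k1 f1 k2 f2. (k1, f1) \<in> C \<and> (k2, f2) \<in> C \<and> (k1, f1) \<noteq> (k2, f2) \<longrightarrow>
        k1 \<noteq> k2 \<and> f1 \<noteq> f2 \<and> (k1, f2) \<notin> E \<and> (k2, f1) \<notin> E)"

definition induced_matching_cover :: "('u \<times> 'f) set \<Rightarrow> ('u \<times> 'f) set set \<Rightarrow> bool" where
  "induced_matching_cover E \<C> \<longleftrightarrow>
     (\<forall>C\<in>\<C>. induced_matching E C \<and> C \<noteq> {}) \<and>
     (\<forall>C1\<in>\<C>. \<forall>C2\<in>\<C>. C1 \<noteq> C2 \<longrightarrow> C1 \<inter> C2 = {}) \<and>
     \<Union>\<C> = E"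

text \<open>Parameters of the symmetric coded caching scheme defined by a (K,F,D)
caching graph and an induced matching cover: each induced matching gives one
transmission of subfile size, so R = (number of matchings)/F; M/N = 1 - D/F;
global caching gain gamma = K (1 - M/N) / R.\<close>
definition mem_ratio :: "nat \<Rightarrow> nat \<Rightarrow> real" where
  "mem_ratio F D = 1 - real D / real F"

definition cover_rate :: "nat \<Rightarrow> nat \<Rightarrow> real" where
  "cover_rate F S = real S / real F"

definition caching_gain :: "nat \<Rightarrow> real \<Rightarrow> real \<Rightarrow> real" where
  "caching_gain K MN R = real K * (1 - MN) / R"

definition qbin1 :: "nat \<Rightarrow> nat \<Rightarrow> real" where
  "qbin1 q a = (real q ^ a - 1) / (real q - 1)"

definition lines :: "('a::field ^ 'k) set set" where
  "lines = {T. vec.subspace T \<and> vec.dim T = 1}"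

text \<open>Sets of t one-dimensional subspaces whose sum has dimension t
(the dimension of T_1 + ... + T_t is the dimension of the span of their union).\<close>
definition indep_lines :: "nat \<Rightarrow> ('a::field ^ 'k) set set set" where
  "indep_lines t = {X. X \<subseteq> lines \<and> card X = t \<and> vec.dim (\<Union>X) = t}"

definition proj_edges :: "nat \<Rightarrow> nat \<Rightarrow>
    (('a::field ^ 'k) set set \<times> ('a ^ 'k) set set) set" where
  "proj_edges n m = {(X, Y). X \<in> indep_lines n \<and> Y \<in> indep_lines m \<and> X \<union> Y \<in> indep_lines (n + m)}"

end

theory Submission
  imports Defs
begin

text \<open>
  A set of t lines of \<open>F\<^sub>q\<^sup>k\<close> is independent over a d-dimensional subspace W if
  together with W it spans a space of dimension d + t. Given such a set, exactly
  \<open>q^(d+t) [k-d-t]\<^sub>q\<close> lines lie outside its span with W, each of them extends it, and every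
  (t+1)-set arises from t+1 such extensions; so there are
  \<open>q^(dt + t(t-1)/2) \<Prod>\<^bsub>i<t\<^esub> [k-d-i]\<^sub>q / t!\<close> such t-sets. With d = 0 this counts users,
  subfiles and independent (n+m)-sets; since the neighbours of X are the m-sets independent
  over the span of X, B is regular, of the degree D given by d = n.

  An edge (X, Y) has X \<inter> Y = {}, so it lies in exactly one of the sets
  \<open>{(X, Z - X) | X \<subseteq> Z, |X| = n}\<close> with Z independent of size n + m, namely Z = X \<union> Y.
  Each of them is an induced matching: for distinct n-subsets X1, X2 of Z, X1 meets Z - X2,
  so (X1, Z - X2) is no edge. The formulas for M/N, R and the gain reduce to
  \<open>S (n+m)! = K n! \<cdot> D m!\<close>, which counts ordered independent (n+m)-tuples of lines by
  their first n and last m entries.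
\<close>

text \<open>No finiteness of the scalars is needed: over an infinite field both sides are 0
  unless B is empty.\<close>

lemma (in vector_space) card_span_independent:
  assumes "finite B" "independent B"
  shows "card (span B) = CARD('a) ^ card B"
  using assms
proof (induction B rule: finite_induct)
  case empty
  then show ?case by simp
next
  case (insert x B)
  have indep: "independent B" and x: "x \<notin> span B"
    using insert by (auto simp: independent_insert)
  let ?f = "\<lambda>(c, s). scale c x + s"
  have inj: "inj_on ?f (UNIV \<times> span B)"
  proof (rule inj_onI, clarsimp)
    fix c1 s1 c2 s2
    assume s: "s1 \<in> span B" "s2 \<in> span B" and eq: "scale c1 x + s1 = scale c2 x + s2"
    then have "scale (c1 - c2) x = s2 - s1"
      by (simp add: scale_left_diff_distrib algebra_simps)
    then have "scale (c1 - c2) x \<in> span B"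
      using s span_diff by simp
    then have "c1 = c2"
      using x span_scale[of "scale (c1 - c2) x" B "inverse (c1 - c2)"] by (cases "c1 = c2") (auto simp: scale_scale)
    then show "c1 = c2 \<and> s1 = s2" using eq by simp
  qed
  have "span (insert x B) = ?f ` (UNIV \<times> span B)"
  proof (intro equalityI subsetI)
    fix y assume "y \<in> span (insert x B)"
    then obtain c where "y - scale c x \<in> span B" using span_insert by blast
    then show "y \<in> ?f ` (UNIV \<times> span B)" by (intro image_eqI[where x="(c, y - scale c x)"]) auto
  next
    fix y assume "y \<in> ?f ` (UNIV \<times> span B)"
    then show "y \<in> span (insert x B)"
      by (auto intro: span_add span_scale span_base span_mono[THEN subsetD, of B "insert x B"])
  qed
  then have "card (span (insert x B)) = CARD('a) * card (span B)"
    using card_image[OF inj] by (simp add: card_cartesian_product)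
  then show ?case using insert indep by simp
qed

lemma (in finite_dimensional_vector_space) card_span:
  "card (span U) = CARD('a) ^ dim U"
proof -
  obtain B where "B \<subseteq> U" "independent B" "U \<subseteq> span B" "card B = dim U"
    using basis_exists by blast
  moreover then have "span B = span U"
    by (metis span_mono span_span subset_antisym)
  ultimately show ?thesis
    using card_span_independent finiteI_independent by metis
qed

lemma lineE:
  fixes L :: "('a::field ^ 'k) set"
  assumes "L \<in> lines"
  obtains v where "v \<noteq> 0" "L = vec.span {v}"
proof -
  have L: "vec.subspace L" "vec.dim L = 1" using assms by (auto simp: lines_def)
  obtain B where B: "B \<subseteq> L" "vec.independent B" "L \<subseteq> vec.span B" "card B = 1"
    using vec.basis_exists[of L] L by auto
  then obtain v where v: "B = {v}" by (auto simp: card_1_singleton_iff)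
  show thesis
  proof
    show "v \<noteq> 0" using B(2) v vec.dependent_zero by blast
    show "L = vec.span {v}" using B v L(1) vec.span_minimal[of "{v}" L] by blast
  qed
qed

lemma span_singleton_in_lines:
  fixes v :: "'a::field ^ 'k"
  assumes "v \<noteq> 0"
  shows "vec.span {v} \<in> lines"
  using assms vec.dim_insert[of v "{}"] by (simp add: lines_def vec.subspace_span)

lemma line_eq_span_singleton:
  fixes L :: "('a::field ^ 'k) set"
  assumes "L \<in> lines" "w \<in> L" "w \<noteq> 0"
  shows "L = vec.span {w}"
proof -
  obtain v where v: "v \<noteq> 0" "L = vec.span {v}" using assms(1) by (rule lineE)
  then obtain c where c: "w = c *s v" using assms(2) vec.span_singleton by blast
  with assms(3) have "v = inverse c *s w" by (auto simp: vec.scale_scale)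
  then have "v \<in> vec.span {w}" by (simp add: vec.span_base vec.span_scale)
  then have "L \<subseteq> vec.span {w}"
    using v(2) vec.span_minimal[of "{v}" "vec.span {w}"] by (simp add: vec.subspace_span)
  moreover have "vec.span {w} \<subseteq> L"
    using assms(2) v(2) vec.span_minimal[of "{w}" L] by (simp add: vec.subspace_span)
  ultimately show ?thesis by blast
qed

lemma card_line:
  fixes L :: "('a::{finite,field} ^ 'k) set"
  assumes "L \<in> lines"
  shows "card L = CARD('a)"
proof -
  have "vec.span L = L" "vec.dim L = 1" using assms by (simp_all add: lines_def)
  then show ?thesis using vec.card_span[of L] by (simp only:) simp
qed

lemma dim_Un_line:
  fixes L :: "('a::field ^ 'k) set"
  assumes "L \<in> lines"
  shows "vec.dim (S \<union> L) = (if L \<subseteq> vec.span S then vec.dim S else Suc (vec.dim S))"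
proof -
  obtain v where v: "v \<noteq> 0" "L = vec.span {v}" using assms by (rule lineE)
  have "vec.span (S \<union> L) = vec.span (insert v S)"
    unfolding vec.span_eq v(2)
    using vec.span_mono[of "{v}" "insert v S"] vec.span_superset[of "insert v S"]
      vec.span_superset[of "S \<union> vec.span {v}"] vec.span_superset[of "{v}"] by blast
  then have "vec.dim (S \<union> L) = vec.dim (insert v S)" by (rule vec.span_eq_dim)
  moreover have "L \<subseteq> vec.span S \<longleftrightarrow> v \<in> vec.span S"
    unfolding v(2) using vec.span_minimal[of "{v}" "vec.span S"] vec.span_superset[of "{v}"]
    by (auto simp: vec.subspace_span)
  ultimately show ?thesis by (simp add: vec.dim_insert)
qed

lemma dim_Un_Union_lines_le:
  fixes X :: "('a::field ^ 'k) set set"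
  assumes "finite X" "X \<subseteq> lines"
  shows "vec.dim (W \<union> \<Union>X) \<le> vec.dim W + card X"
  using assms
proof (induction X rule: finite_induct)
  case (insert L X)
  have "W \<union> \<Union>(insert L X) = (W \<union> \<Union>X) \<union> L" by blast
  then show ?case using insert dim_Un_line[of L "W \<union> \<Union>X"] by (simp split: if_splits)
qed simp

lemma dim_Union_lines_le_card:
  fixes X :: "('a::field ^ 'k) set set"
  assumes "finite X" "X \<subseteq> lines"
  shows "vec.dim (\<Union>X) \<le> card X"
  using dim_Un_Union_lines_le[OF assms, of "{}"] by simp

lemma dim_Union_lines_subset:
  fixes Z :: "('a::field ^ 'k) set set"
  assumes "finite Z" "Z \<subseteq> lines" "vec.dim (\<Union>Z) = card Z" "X \<subseteq> Z"
  shows "vec.dim (\<Union>X) = card X"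
proof -
  have X: "finite X" "X \<subseteq> lines" and ZX: "finite (Z - X)" "Z - X \<subseteq> lines"
    using assms by (auto intro: finite_subset)
  have "card Z = card X + card (Z - X)"
    using assms by (simp add: card_Diff_subset card_mono finite_subset)
  moreover have "\<Union>Z = \<Union>X \<union> \<Union>(Z - X)" using assms(4) by blast
  ultimately show ?thesis
    using assms(3) dim_Un_Union_lines_le[OF ZX, of "\<Union>X"] dim_Union_lines_le_card[OF X]
    by simp
qed

lemma power_diff_eq_qbin1:
  assumes "a \<le> b"
  shows "real q ^ b - real q ^ a = (real q - 1) * real q ^ a * qbin1 q (b - a)"
proof (cases "q = 1")
  case False
  have "real q ^ b = real q ^ a * real q ^ (b - a)"
    using assms by (simp flip: power_add)
  then show ?thesis using False by (simp add: qbin1_def field_simps)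
qed (simp add: qbin1_def)

lemma qbin1_pos:
  assumes "2 \<le> q" "0 < a"
  shows "0 < qbin1 q a"
  using assms by (auto simp: qbin1_def one_less_power intro!: divide_pos_pos)

lemma card_field_ge_2: "2 \<le> CARD('a::{finite,field})"
proof -
  have "card {0::'a, 1} \<le> CARD('a)" by (rule card_mono) simp_all
  then show ?thesis by simp
qed

lemma Diff_span_eq_UN_lines:
  fixes U :: "('a::field ^ 'k) set"
  shows "UNIV - vec.span U = (\<Union>L\<in>{L \<in> lines. \<not> L \<subseteq> vec.span U}. L - {0})"
proof (intro equalityI subsetI)
  fix w assume "w \<in> UNIV - vec.span U"
  then have "w \<noteq> 0" "w \<in> vec.span {w}" "w \<notin> vec.span U"
    using vec.span_zero vec.span_base by auto
  then show "w \<in> (\<Union>L\<in>{L \<in> lines. \<not> L \<subseteq> vec.span U}. L - {0})"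
    using span_singleton_in_lines[of w] by blast
next
  fix w assume "w \<in> (\<Union>L\<in>{L \<in> lines. \<not> L \<subseteq> vec.span U}. L - {0})"
  then obtain L where "L \<in> {L \<in> lines. \<not> L \<subseteq> vec.span U}" "w \<in> L" "w \<noteq> 0" by blast
  then show "w \<in> UNIV - vec.span U"
    using line_eq_span_singleton[of L w] vec.span_minimal[of "{w}" "vec.span U"]
    by (auto simp: vec.subspace_span)
qed

lemma card_lines_not_in_span:
  fixes U :: "('a::{finite,field} ^ 'k) set"
  defines "q \<equiv> CARD('a)"
  shows "real (card {L \<in> lines. \<not> L \<subseteq> vec.span U})
           = real q ^ vec.dim U * qbin1 q (CARD('k) - vec.dim U)"
proof -
  let ?A = "{L \<in> lines. \<not> L \<subseteq> vec.span U}"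
  have zero: "0 \<in> L" if "L \<in> lines" for L :: "('a ^ 'k) set"
    using that by (simp add: lines_def vec.subspace_0)
  have "card (UNIV - vec.span U) = card (\<Union>L\<in>?A. L - {0})"
    by (simp only: Diff_span_eq_UN_lines)
  also have "\<dots> = (\<Sum>L\<in>?A. card (L - {0}))"
  proof (rule card_UN_disjoint)
    show "\<forall>L1\<in>?A. \<forall>L2\<in>?A. L1 \<noteq> L2 \<longrightarrow> (L1 - {0}) \<inter> (L2 - {0}) = {}"
      using line_eq_span_singleton by blast
  qed simp_all
  also have "\<dots> = (\<Sum>L\<in>?A. q - 1)"
    using zero card_line[where 'a='a and 'k='k] unfolding q_def by (intro sum.cong) auto
  also have "\<dots> = card ?A * (q - 1)" by simp
  finally have "card ?A * (q - 1) = card (UNIV :: ('a ^ 'k) set) - card (vec.span U)"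
    by (simp add: card_Diff_subset)
  also have "\<dots> = q ^ CARD('k) - q ^ vec.dim U"
    by (simp add: q_def vec.card_span)
  finally have nat_eq: "card ?A * (q - 1) = q ^ CARD('k) - q ^ vec.dim U" .
  have q2: "2 \<le> q" unfolding q_def by (rule card_field_ge_2)
  have "vec.dim U \<le> CARD('k)"
    using vec.dim_subset_UNIV[of U] by (simp add: vec.dimension_def card_cart_basis)
  then have "q ^ vec.dim U \<le> q ^ CARD('k)" using q2 by (simp add: power_increasing)
  then have "real (card ?A) * (real q - 1) = real q ^ CARD('k) - real q ^ vec.dim U"
    using arg_cong[OF nat_eq, of real] q2 by (simp add: of_nat_diff)
  also have "\<dots> = (real q - 1) * real q ^ vec.dim U * qbin1 q (CARD('k) - vec.dim U)"
    using \<open>vec.dim U \<le> CARD('k)\<close> by (rule power_diff_eq_qbin1)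
  finally show ?thesis using q2 by simp
qed

lemma triangle_number_add:
  "((a::nat) + b) * (a + b - 1) div 2 = a * (a - 1) div 2 + a * b + b * (b - 1) div 2"
proof -
  have even: "2 * (x * (x - 1) div 2) = x * (x - 1)" for x :: nat
    by (cases x) simp_all
  have "(a + b) * (a + b - 1) = a * (a - 1) + 2 * (a * b) + b * (b - 1)"
    by (cases a; cases b) (simp_all add: algebra_simps)
  also have "\<dots> = 2 * (a * (a - 1) div 2 + a * b + b * (b - 1) div 2)"
    by (simp only: even distrib_left)
  finally show ?thesis by simp
qed

lemma prod_lessThan_add: "(\<Prod>i<s + t. f i) = (\<Prod>i<s. f i) * (\<Prod>i<t. f (s + i))"
  for f :: "nat \<Rightarrow> 'a::comm_monoid_mult"
  by (induction t) (simp_all add: mult.assoc)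

definition indep_lines_count :: "nat \<Rightarrow> nat \<Rightarrow> nat \<Rightarrow> nat \<Rightarrow> real" where
  "indep_lines_count q k d t =
     1 / fact t * real q ^ (d * t + t * (t - 1) div 2) * (\<Prod>i<t. qbin1 q (k - d - i))"

lemma indep_lines_count_mult_fact:
  "indep_lines_count q k d t * fact t
     = real q ^ (d * t + t * (t - 1) div 2) * (\<Prod>i<t. qbin1 q (k - d - i))"
  by (simp add: indep_lines_count_def)

lemma indep_lines_count_0:
  "indep_lines_count q k 0 t = 1 / fact t * real q ^ (t * (t - 1) div 2) * (\<Prod>i<t. qbin1 q (k - i))"
  by (simp add: indep_lines_count_def)

lemma indep_lines_count_pos:
  assumes "2 \<le> q" "d + t \<le> k"
  shows "0 < indep_lines_count q k d t"
proof -
  have "0 < (\<Prod>i<t. qbin1 q (k - d - i))"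
    using assms by (auto intro!: prod_pos qbin1_pos)
  then show ?thesis using assms(1) by (simp add: indep_lines_count_def)
qed

lemma indep_lines_count_add:
  "indep_lines_count q k d (s + t) * fact (s + t)
     = indep_lines_count q k d s * fact s * (indep_lines_count q k (d + s) t * fact t)"
proof -
  have "d * (s + t) + (s + t) * (s + t - 1) div 2
          = (d * s + s * (s - 1) div 2) + ((d + s) * t + t * (t - 1) div 2)"
    by (simp only: triangle_number_add) (simp add: algebra_simps)
  moreover have "(\<Prod>i<s + t. qbin1 q (k - d - i))
      = (\<Prod>i<s. qbin1 q (k - d - i)) * (\<Prod>i<t. qbin1 q (k - (d + s) - i))"
    by (simp add: prod_lessThan_add diff_diff_add add.assoc)
  ultimately show ?thesis
    unfolding indep_lines_count_mult_fact by (simp add: power_add mult_ac)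
qed

definition indep_lines_over :: "('a::field ^ 'k) set \<Rightarrow> nat \<Rightarrow> ('a ^ 'k) set set set" where
  "indep_lines_over W t =
     {X. X \<subseteq> lines \<and> card X = t \<and> vec.dim (W \<union> \<Union>X) = vec.dim W + t}"

lemma indep_lines_eq_indep_lines_over_empty: "indep_lines t = indep_lines_over {} t"
  by (auto simp: indep_lines_def indep_lines_over_def)

lemma insert_in_indep_lines_over:
  fixes W :: "('a::{finite,field} ^ 'k) set"
  assumes "X \<in> indep_lines_over W t" "L \<in> lines" "\<not> L \<subseteq> vec.span (W \<union> \<Union>X)"
  shows "L \<notin> X" "insert L X \<in> indep_lines_over W (Suc t)"
proof -
  have X: "X \<subseteq> lines" "card X = t" "vec.dim (W \<union> \<Union>X) = vec.dim W + t"
    using assms(1) by (simp_all add: indep_lines_over_def)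
  show "L \<notin> X"
  proof
    assume "L \<in> X"
    then have "L \<subseteq> vec.span (W \<union> \<Union>X)" using vec.span_superset[of "W \<union> \<Union>X"] by blast
    with assms(3) show False ..
  qed
  have "W \<union> \<Union>(insert L X) = (W \<union> \<Union>X) \<union> L" by blast
  then have "vec.dim (W \<union> \<Union>(insert L X)) = Suc (vec.dim W + t)"
    using X(3) assms(2,3) dim_Un_line[of L "W \<union> \<Union>X"] by simp
  moreover have "card (insert L X) = Suc t" using X(2) \<open>L \<notin> X\<close> by simp
  ultimately show "insert L X \<in> indep_lines_over W (Suc t)"
    using X(1) assms(2) by (simp add: indep_lines_over_def)
qed

lemma remove_from_indep_lines_over:
  fixes W :: "('a::{finite,field} ^ 'k) set"
  assumes "Y \<in> indep_lines_over W (Suc t)" "L \<in> Y"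
  shows "Y - {L} \<in> indep_lines_over W t" "\<not> L \<subseteq> vec.span (W \<union> \<Union>(Y - {L}))"
proof -
  let ?S = "W \<union> \<Union>(Y - {L})"
  have Y: "Y \<subseteq> lines" "card (Y - {L}) = t" "vec.dim (W \<union> \<Union>Y) = Suc (vec.dim W + t)"
    using assms by (simp_all add: indep_lines_over_def)
  have L: "L \<in> lines" using Y(1) assms(2) by blast
  have "?S \<union> L = W \<union> \<Union>Y" using assms(2) by blast
  then have dim_SL: "vec.dim (?S \<union> L) = Suc (vec.dim W + t)" using Y(3) by simp
  have "vec.dim ?S \<le> vec.dim W + t"
    using dim_Un_Union_lines_le[of "Y - {L}" W] Y(1,2) by auto
  then show nL: "\<not> L \<subseteq> vec.span ?S"
    using dim_SL dim_Un_line[OF L, of ?S] by auto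
  then have "vec.dim ?S = vec.dim W + t"
    using dim_SL dim_Un_line[OF L, of ?S] by simp
  then show "Y - {L} \<in> indep_lines_over W t"
    using Y(1,2) by (auto simp: indep_lines_over_def)
qed

lemma card_indep_lines_over_Suc:
  fixes W :: "('a::{finite,field} ^ 'k) set"
  defines "q \<equiv> CARD('a)" and "d \<equiv> vec.dim W"
  shows "real (card (indep_lines_over W (Suc t))) * Suc t
           = real (card (indep_lines_over W t)) * real q ^ (d + t) * qbin1 q (CARD('k) - d - t)"
proof -
  define Out where "Out X = {L \<in> lines. \<not> L \<subseteq> vec.span (W \<union> \<Union>X)}" for X
  let ?P = "Sigma (indep_lines_over W t) Out"
  let ?Q = "Sigma (indep_lines_over W (Suc t)) (\<lambda>Y. Y)"
  have "bij_betw (\<lambda>(X, L). (insert L X, L)) ?P ?Q"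
  proof (rule bij_betw_byWitness[where f'="\<lambda>(Y, L). (Y - {L}, L)"])
    have "L \<notin> X \<and> insert L X \<in> indep_lines_over W (Suc t)" if "(X, L) \<in> ?P" for X L
      using that insert_in_indep_lines_over[of X W t L] by (simp add: Out_def)
    then show "\<forall>p\<in>?P. (\<lambda>(Y, L). (Y - {L}, L)) ((\<lambda>(X, L). (insert L X, L)) p) = p"
      and "(\<lambda>(X, L). (insert L X, L)) ` ?P \<subseteq> ?Q"
      by auto
    have "Y - {L} \<in> indep_lines_over W t \<and> L \<in> Out (Y - {L})" if "(Y, L) \<in> ?Q" for Y L
      using that remove_from_indep_lines_over[of Y W t L] by (auto simp: Out_def indep_lines_over_def)
    then show "(\<lambda>(Y, L). (Y - {L}, L)) ` ?Q \<subseteq> ?P" by auto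
    show "\<forall>p\<in>?Q. (\<lambda>(X, L). (insert L X, L)) ((\<lambda>(Y, L). (Y - {L}, L)) p) = p"
      by (auto simp: insert_absorb)
  qed
  then have "card (indep_lines_over W (Suc t)) * Suc t = card ?P"
    by (simp add: bij_betw_same_card indep_lines_over_def)
  moreover have "real (card (Out X)) = real q ^ (d + t) * qbin1 q (CARD('k) - d - t)"
    if "X \<in> indep_lines_over W t" for X
    using that card_lines_not_in_span[of "W \<union> \<Union>X"]
    by (simp add: Out_def indep_lines_over_def q_def d_def diff_diff_add)
  then have "real (card ?P) = (\<Sum>X\<in>indep_lines_over W t. real q ^ (d + t) * qbin1 q (CARD('k) - d - t))"
    by simp
  ultimately show ?thesis by (metis of_nat_mult sum_constant mult.assoc)
qed

lemma card_indep_lines_over: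
  fixes W :: "('a::{finite,field} ^ 'k) set"
  shows "real (card (indep_lines_over W t))
           = indep_lines_count CARD('a) CARD('k) (vec.dim W) t"
proof -
  let ?c = "indep_lines_count CARD('a) CARD('k) (vec.dim W)"
  have "real (card (indep_lines_over W t)) * fact t = ?c t * fact t"
  proof (induction t)
    case 0
    have "indep_lines_over W 0 = {{}}" by (auto simp: indep_lines_over_def)
    then show ?case by (simp add: indep_lines_count_def)
  next
    case (Suc t)
    have "real (card (indep_lines_over W (Suc t))) * fact (Suc t)
            = real (card (indep_lines_over W (Suc t))) * Suc t * fact t"
      by (simp add: algebra_simps)
    also have "\<dots> = real (card (indep_lines_over W t)) * fact t
        * (real CARD('a) ^ (vec.dim W + t) * qbin1 CARD('a) (CARD('k) - vec.dim W - t))"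
      unfolding card_indep_lines_over_Suc by (simp add: mult_ac)
    also have "\<dots> = ?c t * fact t * (indep_lines_count CARD('a) CARD('k) (vec.dim W + t) 1 * fact 1)"
      unfolding Suc.IH by (simp add: indep_lines_count_def)
    also have "\<dots> = ?c (Suc t) * fact (Suc t)"
      using indep_lines_count_add[of _ _ _ t 1] by simp
    finally show ?case .
  qed
  then show ?thesis by simp
qed

lemma card_indep_lines:
  "real (card (indep_lines t :: ('a::{finite,field} ^ 'k) set set set))
     = indep_lines_count CARD('a) CARD('k) 0 t"
  using card_indep_lines_over[of "{} :: ('a ^ 'k) set" t]
  by (simp add: indep_lines_eq_indep_lines_over_empty)

lemma indep_lines_nonempty:
  assumes "t \<le> CARD('k)"
  shows "(indep_lines t :: ('a::{finite,field} ^ 'k) set set set) \<noteq> {}"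
  using card_indep_lines[where 'a='a and 'k='k and t=t] assms
    indep_lines_count_pos[OF card_field_ge_2[where 'a='a], of 0 t "CARD('k)"]
  by auto

lemma proj_edges_disjoint:
  fixes X :: "('a::{finite,field} ^ 'k) set set"
  assumes "(X, Y) \<in> proj_edges n m"
  shows "X \<inter> Y = {}"
proof -
  have "card X = n" "card Y = m" "card (X \<union> Y) = n + m"
    using assms by (auto simp: proj_edges_def indep_lines_def)
  then show ?thesis using card_Un_Int[of X Y] by simp
qed

lemma proj_edges_neighbours:
  fixes X :: "('a::{finite,field} ^ 'k) set set"
  assumes "X \<in> indep_lines n"
  shows "{Y. (X, Y) \<in> proj_edges n m} = indep_lines_over (\<Union>X) m"
proof (intro set_eqI iffI)
  have X: "X \<subseteq> lines" "card X = n" "vec.dim (\<Union>X) = n"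
    using assms by (auto simp: indep_lines_def)
  have union: "\<Union>(X \<union> Y) = \<Union>X \<union> \<Union>Y" for Y by blast
  fix Y
  show "Y \<in> indep_lines_over (\<Union>X) m" if "Y \<in> {Y. (X, Y) \<in> proj_edges n m}"
    using that X by (auto simp: proj_edges_def indep_lines_def indep_lines_over_def union)
  assume "Y \<in> indep_lines_over (\<Union>X) m"
  then have Y: "Y \<subseteq> lines" "card Y = m" "vec.dim (\<Union>(X \<union> Y)) = n + m"
    using X by (auto simp: indep_lines_over_def union)
  have "vec.dim (\<Union>Y \<union> \<Union>X) \<le> vec.dim (\<Union>Y) + n"
    using dim_Un_Union_lines_le[of X "\<Union>Y"] X by simp
  then have "vec.dim (\<Union>Y) = m"
    using Y dim_Union_lines_le_card[of Y] by (simp add: union sup_commute)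
  moreover have "card (X \<union> Y) = n + m"
    using Y X dim_Union_lines_le_card[of "X \<union> Y"] card_Un_le[of X Y] by simp
  ultimately show "Y \<in> {Y. (X, Y) \<in> proj_edges n m}"
    using assms X Y by (simp add: proj_edges_def indep_lines_def)
qed

lemma card_proj_edges_neighbours:
  fixes X :: "('a::{finite,field} ^ 'k) set set"
  assumes "X \<in> indep_lines n"
  shows "real (card {Y. (X, Y) \<in> proj_edges n m}) = indep_lines_count CARD('a) CARD('k) n m"
  using card_indep_lines_over[of "\<Union>X" m] assms
  by (simp add: proj_edges_neighbours indep_lines_def)

lemma caching_graph_proj_edges:
  assumes "n \<le> CARD('k)"
  obtains D where
    "caching_graph (indep_lines n) (indep_lines m)
       (proj_edges n m :: (('a::{finite,field} ^ 'k) set set \<times> _) set)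
       (card (indep_lines n :: ('a ^ 'k) set set set)) (card (indep_lines m :: ('a ^ 'k) set set set)) D"
    "real D = indep_lines_count CARD('a) CARD('k) n m"
proof -
  obtain X0 :: "('a ^ 'k) set set" where X0: "X0 \<in> indep_lines n"
    using indep_lines_nonempty[OF assms] by blast
  let ?D = "card {Y. (X0, Y) \<in> proj_edges n m}"
  have "card {Y. (X, Y) \<in> proj_edges n m} = ?D" if "X \<in> indep_lines n" for X :: "('a ^ 'k) set set"
    using card_proj_edges_neighbours[OF that, of m] card_proj_edges_neighbours[OF X0, of m] by simp
  then show thesis
    using that[of ?D] card_proj_edges_neighbours[OF X0, of m]
    by (auto simp: caching_graph_def bipartite_def proj_edges_def)
qed

definition split_matching :: "nat \<Rightarrow> 'b set \<Rightarrow> ('b set \<times> 'b set) set" where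
  "split_matching n Z = (\<lambda>X. (X, Z - X)) ` {X. X \<subseteq> Z \<and> card X = n}"

lemma fst_Un_snd_split_matching: "p \<in> split_matching n Z \<Longrightarrow> fst p \<union> snd p = Z"
  by (auto simp: split_matching_def)

lemma card_split_matching:
  assumes "finite Z"
  shows "card (split_matching n Z) = card Z choose n"
proof -
  have "inj_on (\<lambda>X. (X, Z - X)) {X. X \<subseteq> Z \<and> card X = n}" by (rule inj_onI) simp
  then show ?thesis
    using n_subsets[OF assms] by (simp add: split_matching_def card_image)
qed

lemma split_matching_nonempty:
  assumes "finite Z" "n \<le> card Z"
  shows "split_matching n Z \<noteq> {}"
  using card_split_matching[OF assms(1), of n] assms(2) by auto

lemma split_matching_subset_proj_edges:
  fixes Z :: "('a::{finite,field} ^ 'k) set set"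
  assumes "Z \<in> indep_lines (n + m)"
  shows "split_matching n Z \<subseteq> proj_edges n m"
proof
  have Z: "Z \<subseteq> lines" "card Z = n + m" "vec.dim (\<Union>Z) = card Z"
    using assms by (auto simp: indep_lines_def)
  fix p assume "p \<in> split_matching n Z"
  then obtain X where p: "p = (X, Z - X)" "X \<subseteq> Z" "card X = n"
    by (auto simp: split_matching_def)
  have "X \<in> indep_lines n" "Z - X \<in> indep_lines m"
    using p Z dim_Union_lines_subset[of Z X] dim_Union_lines_subset[of Z "Z - X"]
    by (auto simp: indep_lines_def card_Diff_subset)
  moreover have "X \<union> (Z - X) \<in> indep_lines (n + m)"
    using assms p(2) by (simp add: Un_absorb1)
  ultimately show "p \<in> proj_edges n m" using p(1) by (simp add: proj_edges_def)
qed

lemma induced_matching_split_matching: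
  fixes Z :: "('a::{finite,field} ^ 'k) set set"
  assumes "Z \<in> indep_lines (n + m)"
  shows "induced_matching (proj_edges n m) (split_matching n Z)"
proof -
  have "card Z = n + m" using assms by (simp add: indep_lines_def)
  have no_cross_edge: "(X1, Z - X2) \<notin> proj_edges n m"
    if "X1 \<subseteq> Z" "X2 \<subseteq> Z" "card X1 = n" "card X2 = n" "X1 \<noteq> X2" for X1 X2
  proof
    assume "(X1, Z - X2) \<in> proj_edges n m"
    then have "X1 \<subseteq> X2" using proj_edges_disjoint that(1) by blast
    then show False using that by (simp add: card_subset_eq)
  qed
  show ?thesis
    unfolding induced_matching_def
  proof (rule conjI; (intro allI impI)?)
    show "split_matching n Z \<subseteq> proj_edges n m"
      using assms by (rule split_matching_subset_proj_edges)
    fix X1 Y1 X2 Y2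
    assume "(X1, Y1) \<in> split_matching n Z \<and> (X2, Y2) \<in> split_matching n Z \<and> (X1, Y1) \<noteq> (X2, Y2)"
    then have X: "X1 \<subseteq> Z" "X2 \<subseteq> Z" "card X1 = n" "card X2 = n" "X1 \<noteq> X2"
      and Y: "Y1 = Z - X1" "Y2 = Z - X2"
      by (auto simp: split_matching_def)
    have "Y1 \<noteq> Y2"
    proof
      assume "Y1 = Y2"
      then have "Z - (Z - X1) = Z - (Z - X2)" using Y by simp
      then show False using X by (simp add: double_diff)
    qed
    then show "X1 \<noteq> X2 \<and> Y1 \<noteq> Y2 \<and> (X1, Y2) \<notin> proj_edges n m \<and> (X2, Y1) \<notin> proj_edges n m"
      using X Y no_cross_edge[of X1 X2] no_cross_edge[of X2 X1] by simp
  qed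
qed

lemma proj_edges_subset_split_matchings:
  "proj_edges n m \<subseteq> (\<Union>Z\<in>indep_lines (n + m). split_matching n (Z :: ('a::{finite,field} ^ 'k) set set))"
proof
  fix p assume "p \<in> (proj_edges n m :: (('a ^ 'k) set set \<times> _) set)"
  moreover obtain X Y where p: "p = (X, Y)" by fastforce
  ultimately have edge: "(X, Y) \<in> proj_edges n m" by simp
  then have "(X \<union> Y) - X = Y" using proj_edges_disjoint by blast
  moreover have "card X = n" "X \<union> Y \<in> indep_lines (n + m)"
    using edge by (auto simp: proj_edges_def indep_lines_def)
  ultimately show "p \<in> (\<Union>Z\<in>indep_lines (n + m). split_matching n Z)"
    unfolding split_matching_def p by blast
qed

lemma induced_matching_cover_split_matchings:
  "induced_matching_cover (proj_edges n m :: (('a::{finite,field} ^ 'k) set set \<times> _) set)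
     (split_matching n ` indep_lines (n + m))"
  unfolding induced_matching_cover_def
proof (intro conjI ballI impI)
  fix C assume "C \<in> split_matching n ` (indep_lines (n + m) :: ('a ^ 'k) set set set)"
  then obtain Z where Z: "Z \<in> indep_lines (n + m)" "C = split_matching n Z" by blast
  then show "induced_matching (proj_edges n m) C"
    using induced_matching_split_matching by blast
  show "C \<noteq> {}" using Z split_matching_nonempty[of Z n] by (simp add: indep_lines_def)
next
  fix C1 C2 assume "C1 \<in> split_matching n ` (indep_lines (n + m) :: ('a ^ 'k) set set set)"
    "C2 \<in> split_matching n ` (indep_lines (n + m) :: ('a ^ 'k) set set set)" "C1 \<noteq> C2"
  then obtain Z1 Z2 where "C1 = split_matching n Z1" "C2 = split_matching n Z2" "Z1 \<noteq> Z2"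
    by blast
  then show "C1 \<inter> C2 = {}"
    using fst_Un_snd_split_matching[of _ n Z1] fst_Un_snd_split_matching[of _ n Z2] by blast
next
  show "\<Union>(split_matching n ` indep_lines (n + m)) = (proj_edges n m :: (('a ^ 'k) set set \<times> _) set)"
    using proj_edges_subset_split_matchings split_matching_subset_proj_edges by blast
qed

lemma card_split_matchings:
  "card (split_matching n ` (indep_lines (n + m) :: ('a::{finite,field} ^ 'k) set set set))
     = card (indep_lines (n + m) :: ('a ^ 'k) set set set)"
proof (rule card_image, rule inj_onI)
  fix Z1 Z2 :: "('a ^ 'k) set set"
  assume Z: "Z1 \<in> indep_lines (n + m)" "split_matching n Z1 = split_matching n Z2"
  have "split_matching n Z1 \<noteq> {}"
    using Z(1) split_matching_nonempty[of Z1 n] by (simp add: indep_lines_def)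
  then obtain p where p: "p \<in> split_matching n Z1" by blast
  then have "p \<in> split_matching n Z2" using Z(2) by blast
  then show "Z1 = Z2"
    using p fst_Un_snd_split_matching[of p n Z1] fst_Un_snd_split_matching[of p n Z2] by (simp only:)
qed

lemma mem_ratio_indep_lines_count:
  assumes "2 \<le> q" "m \<le> k"
    and "real F = indep_lines_count q k 0 m" "real D = indep_lines_count q k n m"
  shows "mem_ratio F D = 1 - real q ^ (n * m) * (\<Prod>i<m. qbin1 q (k - n - i) / qbin1 q (k - i))"
proof -
  have "(\<Prod>i<m. qbin1 q (k - i)) > 0"
    using assms(1,2) by (auto intro!: prod_pos qbin1_pos)
  moreover have "real q > 0" using assms(1) by simp
  ultimately have "real D / real F = real q ^ (n * m) * ((\<Prod>i<m. qbin1 q (k - n - i)) / (\<Prod>i<m. qbin1 q (k - i)))"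
    unfolding assms(3,4) indep_lines_count_def by (simp add: power_add field_simps)
  then show ?thesis by (simp add: mem_ratio_def prod_dividef)
qed

lemma cover_rate_indep_lines_count:
  assumes "2 \<le> q" "m \<le> k"
    and "real F = indep_lines_count q k 0 m" "real S = indep_lines_count q k 0 (n + m)"
  shows "cover_rate F S = fact m * real q ^ (n * m) / fact (n + m)
           * real q ^ (n * (n - 1) div 2) * (\<Prod>i<n. qbin1 q (k - m - i))"
proof -
  have "0 < indep_lines_count q k 0 m" using assms(1,2) by (simp add: indep_lines_count_pos)
  moreover have "indep_lines_count q k 0 (m + n) * fact (m + n)
      = indep_lines_count q k 0 m * fact m * (indep_lines_count q k m n * fact n)"
    using indep_lines_count_add[of q k 0 m n] by simp
  ultimately have "real S / real F = fact m / fact (n + m) * (indep_lines_count q k m n * fact n)"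
    unfolding assms(3,4) by (simp add: add.commute field_simps)
  then show ?thesis
    unfolding cover_rate_def indep_lines_count_mult_fact by (simp add: power_add mult_ac)
qed

lemma caching_gain_indep_lines_count:
  assumes "2 \<le> q" "n + m \<le> k"
    and "real K = indep_lines_count q k 0 n" "real F = indep_lines_count q k 0 m"
    and "real D = indep_lines_count q k n m" "real S = indep_lines_count q k 0 (n + m)"
  shows "caching_gain K (mem_ratio F D) (cover_rate F S) = real ((n + m) choose n)"
proof -
  have pos: "0 < indep_lines_count q k 0 t" if "t \<le> k" for t
    using assms(1) that by (simp add: indep_lines_count_pos)
  have "caching_gain K (mem_ratio F D) (cover_rate F S) = real K * real D / real S"
    using pos[of m] assms by (simp add: caching_gain_def mem_ratio_def cover_rate_def)
  also have "\<dots> = fact (n + m) / (fact n * fact m)"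
    using indep_lines_count_add[of q k 0 n m] pos[of "n + m"] assms
    by (simp add: field_simps)
  also have "\<dots> = real ((n + m) choose n)"
    by (simp add: binomial_fact)
  finally show ?thesis .
qed

theorem theorem3:
  fixes n m :: nat
  assumes "0 < n" and "0 < m" and "n + m \<le> CARD('k)"
  shows "let q = CARD('a::{finite,field}); k = CARD('k::finite);
             L = (indep_lines n :: ('a ^ 'k) set set set);
             R = (indep_lines m :: ('a ^ 'k) set set set);
             E = (proj_edges n m :: (('a ^ 'k) set set \<times> ('a ^ 'k) set set) set)
         in \<exists>K F D \<C>.
              caching_graph L R E K F D \<and>
              real K = 1 / fact n * real q ^ (n * (n - 1) div 2) * (\<Prod>i<n. qbin1 q (k - i)) \<and>
              real F = 1 / fact m * real q ^ (m * (m - 1) div 2) * (\<Prod>i<m. qbin1 q (k - i)) \<and>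
              induced_matching_cover E \<C> \<and>
              real (card \<C>) = 1 / fact (n + m) * real q ^ ((n + m) * (n + m - 1) div 2)
                                * (\<Prod>i<n + m. qbin1 q (k - i)) \<and>
              (\<forall>C\<in>\<C>. card C = (n + m) choose n) \<and>
              mem_ratio F D = 1 - real q ^ (n * m) * (\<Prod>i<m. qbin1 q (k - n - i) / qbin1 q (k - i)) \<and>
              cover_rate F (card \<C>) = fact m * real q ^ (n * m) / fact (n + m)
                                * real q ^ (n * (n - 1) div 2) * (\<Prod>i<n. qbin1 q (k - m - i)) \<and>
              caching_gain K (mem_ratio F D) (cover_rate F (card \<C>)) = real ((n + m) choose n)"
proof -
  let ?q = "CARD('a)" and ?k = "CARD('k)"
  let ?L = "indep_lines n :: ('a ^ 'k) set set set"
  let ?R = "indep_lines m :: ('a ^ 'k) set set set"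
  let ?C = "split_matching n ` (indep_lines (n + m) :: ('a ^ 'k) set set set)"
  obtain D where graph: "caching_graph ?L ?R (proj_edges n m) (card ?L) (card ?R) D"
    and D: "real D = indep_lines_count ?q ?k n m"
    using caching_graph_proj_edges assms(3) by (metis add_leE)
  have K: "real (card ?L) = indep_lines_count ?q ?k 0 n"
    and F: "real (card ?R) = indep_lines_count ?q ?k 0 m"
    and S: "real (card ?C) = indep_lines_count ?q ?k 0 (n + m)"
    by (simp_all only: card_indep_lines card_split_matchings)
  have q: "2 \<le> ?q" by (rule card_field_ge_2)
  have "m \<le> ?k" using assms(3) by simp
  show ?thesis
    unfolding Let_def
  proof (rule exI[where x = "card ?L"], rule exI[where x = "card ?R"], rule exI[where x = D],
      rule exI[where x = ?C], intro conjI)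
    show "\<forall>C\<in>?C. card C = (n + m) choose n"
      by (auto simp: card_split_matching indep_lines_def)
  qed (rule graph induced_matching_cover_split_matchings
      K[unfolded indep_lines_count_0] F[unfolded indep_lines_count_0] S[unfolded indep_lines_count_0]
      mem_ratio_indep_lines_count[OF q \<open>m \<le> ?k\<close> F D]
      cover_rate_indep_lines_count[OF q \<open>m \<le> ?k\<close> F S]
      caching_gain_indep_lines_count[OF q assms(3) K F D S])+
qed

end
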